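(* Let $T\in V$ be a target variable. If $\zeta_T=0$ (i.e. $T\notin\Upsilon_i$ for all $i$) and $\Upsilon$ is conservative, then $\bigcup_{i=1}^{n}MB_i(T)=MB(T)$.
   Context: Let $G=(V,E)$ be a DAG (causal Bayesian network) over a finite set $V$ of random variables with joint distribution $P$ satisfying the Markov condition with respect to $G$; causal sufficiency is assumed. For $X\in V$, $pa(X)$ and $ch(X)$ are the parents and children of $X$ in $G$, $sp(X)=\big(\bigcup_{Y\in ch(X)}pa(Y)\big)\setminus\{X\}$ is the set of spouses, and $MB(X)=pa(X)\cup ch(X)\cup sp(X)$ is the Markov blanket. There are $n\ge 1$ intervention experiments; in the $i$-th, the set $\Upsilon_i\subseteq V$ (possibly empty) is manipulated, and $\Upsilon=\{\Upsilon_1,\dots,\Upsilon_n\}$. The post-intervention DAG is $G_i=(V,E_i)$ with $E_i=\{(a,b)\in E: b\notin\Upsilon_i\}$, with distribution $P_i(V)=\prod_{V_j\notin\Upsilon_i}P(V_j\mid pa(V_j))\prod_{V_j\in\Upsilon_i}P_i(V_j)$, and $D_i$ is a dataset drawn from $P_i$. It is assumed that each $P_i$ is faithful to $G_i$ and that conditional independence tests on $D_i$ are reliable (return exactly the conditional independences of $P_i$). $MB_i(T)$ denotes the Markov blanket of $T$ found in $D_i$, i.e. the set of parents, children and spouses of $T$ in $G_i$. $\zeta_T=|\{i:T\in\Upsilon_i\}|$ is the number of experiments in which $T$ is manipulated. $\Upsilon$ is called conservative if for every $V_j\in\bigcup_{i=1}^n\Upsilon_i$ there exists $i$ with $V_j\notin\Upsilon_i$.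 *)

theory Defs
  imports Main
begin

definition is_dag :: "'v set \<Rightarrow> ('v \<times> 'v) set \<Rightarrow> bool" where
  "is_dag V E \<longleftrightarrow> finite V \<and> E \<subseteq> V \<times> V \<and> acyclic E"

definition pa :: "('v \<times> 'v) set \<Rightarrow> 'v \<Rightarrow> 'v set" where
  "pa E x = {a. (a, x) \<in> E}"

definition ch :: "('v \<times> 'v) set \<Rightarrow> 'v \<Rightarrow> 'v set" where
  "ch E x = {b. (x, b) \<in> E}"

definition sp :: "('v \<times> 'v) set \<Rightarrow> 'v \<Rightarrow> 'v set" where
  "sp E x = (\<Union>y\<in>ch E x. pa E y) - {x}"

definition MB :: "('v \<times> 'v) set \<Rightarrow> 'v \<Rightarrow> 'v set" where
  "MB E x = pa E x \<union> ch E x \<union> sp E x"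

definition post_edges :: "('v \<times> 'v) set \<Rightarrow> 'v set \<Rightarrow> ('v \<times> 'v) set" where
  "post_edges E U = {(a, b) \<in> E. b \<notin> U}"

text \<open>Experiments are indexed by 1..n; Ups i is the manipulated set of experiment i.\<close>
definition zeta :: "nat \<Rightarrow> (nat \<Rightarrow> 'v set) \<Rightarrow> 'v \<Rightarrow> nat" where
  "zeta n Ups T = card {i \<in> {1..n}. T \<in> Ups i}"

definition conservative :: "nat \<Rightarrow> (nat \<Rightarrow> 'v set) \<Rightarrow> bool" where
  "conservative n Ups \<longleftrightarrow> (\<forall>v \<in> (\<Union>i\<in>{1..n}. Ups i). \<exists>i\<in>{1..n}. v \<notin> Ups i)"

end

theory Submission
  imports Defs
begin

text \<open>Deleting edges only shrinks a Markov blanket, so each experiment sees part of MB(T).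
  Conversely, since T itself is never manipulated, every experiment keeps all edges into T,
  hence all parents of T; and a child c of T keeps both its edge from T and all its other
  parents in any experiment where c is not manipulated, which exists by conservativeness.\<close>

lemma MB_mono: "E' \<subseteq> E \<Longrightarrow> MB E' x \<subseteq> MB E x"
  unfolding MB_def pa_def ch_def sp_def by blast

lemma post_edges_subset: "post_edges E U \<subseteq> E"
  unfolding post_edges_def by blast

lemma MB_eq_pa_Un_children_and_coparents:
  "MB E x = pa E x \<union> (\<Union>c\<in>ch E x. insert c (pa E c - {x}))"
  unfolding MB_def sp_def by blast

lemma pa_post_edges: "x \<notin> U \<Longrightarrow> pa (post_edges E U) x = pa E x"
  unfolding pa_def post_edges_def by blast

lemma ch_post_edges: "ch (post_edges E U) x = ch E x - U"
  unfolding ch_def post_edges_def by blast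

lemma child_and_coparents_in_MB_post_edges:
  assumes "c \<in> ch E x" and "c \<notin> U"
  shows "insert c (pa E c - {x}) \<subseteq> MB (post_edges E U) x"
proof -
  have "c \<in> ch (post_edges E U) x"
    using assms by (simp add: ch_post_edges)
  moreover have "pa (post_edges E U) c = pa E c"
    using assms(2) by (rule pa_post_edges)
  ultimately show ?thesis
    unfolding MB_def sp_def by blast
qed

lemma zeta_eq_0_iff: "zeta n Ups x = 0 \<longleftrightarrow> (\<forall>i\<in>{1..n}. x \<notin> Ups i)"
  unfolding zeta_def by (auto simp: card_eq_0_iff)

lemma conservative_unmanipulated_somewhere:
  assumes "conservative n Ups" and "n \<ge> 1"
  obtains i where "i \<in> {1..n}" and "v \<notin> Ups i"
  using assms unfolding conservative_def by (cases "\<exists>i\<in>{1..n}. v \<in> Ups i") fastforce+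

theorem theorem2:
  fixes V :: "'v set" and E :: "('v \<times> 'v) set" and n :: nat
    and Ups :: "nat \<Rightarrow> 'v set" and T :: 'v
  assumes "is_dag V E"
    and "n \<ge> 1"
    and "\<forall>i\<in>{1..n}. Ups i \<subseteq> V"
    and "T \<in> V"
    and "zeta n Ups T = 0"
    and "conservative n Ups"
  shows "(\<Union>i\<in>{1..n}. MB (post_edges E (Ups i)) T) = MB E T"
proof
  show "(\<Union>i\<in>{1..n}. MB (post_edges E (Ups i)) T) \<subseteq> MB E T"
    by (intro UN_least MB_mono post_edges_subset)
next
  have one: "1 \<in> {1..n}" using \<open>n \<ge> 1\<close> by simp
  have "pa E T = pa (post_edges E (Ups 1)) T"
    using \<open>zeta n Ups T = 0\<close> one by (simp add: zeta_eq_0_iff pa_post_edges)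
  also have "\<dots> \<subseteq> MB (post_edges E (Ups 1)) T"
    unfolding MB_def by blast
  finally have parents: "pa E T \<subseteq> (\<Union>i\<in>{1..n}. MB (post_edges E (Ups i)) T)"
    using one by blast
  have children: "insert c (pa E c - {T}) \<subseteq> (\<Union>i\<in>{1..n}. MB (post_edges E (Ups i)) T)"
    if "c \<in> ch E T" for c
  proof -
    obtain i where "i \<in> {1..n}" and "c \<notin> Ups i"
      using conservative_unmanipulated_somewhere[OF \<open>conservative n Ups\<close> \<open>n \<ge> 1\<close>] .
    then have "insert c (pa E c - {T}) \<subseteq> MB (post_edges E (Ups i)) T"
      using that by (intro child_and_coparents_in_MB_post_edges)
    with \<open>i \<in> {1..n}\<close> show ?thesis by blast
  qed
  show "MB E T \<subseteq> (\<Union>i\<in>{1..n}. MB (post_edges E (Ups i)) T)"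
    unfolding MB_eq_pa_Un_children_and_coparents[of E T] using parents children
    by (intro Un_least UN_least)
qed

end
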